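(* (1) Let $R$ be one of the following graphs with a distinguished vertex $v$: a star $S_r$ with $r\ge 2$ leaves and center $v$; a healthy spider $S(0,r)$ with $r\ge2$ feet and head $v$; a cycle $C_n$ with $n\ge5$ and $v\in V(C_n)$ arbitrary; a path $P_n$ with $n\ge5$ and $v$ a support vertex of $P_n$. Let $H$ be a graph with no isolated vertices, $V(H)\cap V(R)=\emptyset$, and let $u\in V(H)$ be such that some $\gamma_{tR}(H)$-function $f$ satisfies $f(u)>0$ (and $f(u)=2$ in the case $R=S(0,r)$). Let $G$ be obtained from the disjoint union $H\cup R$ by adding $s$ edges, one of which is $uv$. Then $b_{tR}(G)\le s$. (2) If a graph $G$ (with no isolated vertices) has adjacent support vertices $u,v$ such that $v$ is adjacent to $r\ge2$ leaves, then $b_{tR}(G)\le \deg(v)-r$.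
   Context: A TRDF on $G=(V,E)$ is a function $f:V\to\{0,1,2\}$ such that every $v$ with $f(v)=0$ has a neighbor $u$ with $f(u)=2$ and the subgraph induced by $\{v:f(v)>0\}$ has no isolated vertices; $\gamma_{tR}(G)$ is its minimum weight, and a $\gamma_{tR}(G)$-function is a TRDF of weight $\gamma_{tR}(G)$. $b_{tR}(G)$ is the minimum $|E'|$ such that $G-E'$ has no isolated vertices and $\gamma_{tR}(G-E')>\gamma_{tR}(G)$ ($\infty$ if none). A leaf is a vertex of degree 1; a support vertex is a vertex adjacent to a leaf. The healthy spider $S(0,r)$ is the star $K_{1,r}$ with every edge subdivided once; its center is the head and the vertices at distance 2 from the head are the feet. *)

theory Defs
  imports Main "HOL-Library.Extended_Nat"
begin

definition graph :: "'a set \<Rightarrow> 'a set set \<Rightarrow> bool" where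
  "graph V E \<longleftrightarrow> finite V \<and> (\<forall>e\<in>E. \<exists>x y. x \<in> V \<and> y \<in> V \<and> x \<noteq> y \<and> e = {x, y})"

definition deg :: "'a set set \<Rightarrow> 'a \<Rightarrow> nat" where
  "deg E x = card {y. {x, y} \<in> E}"

definition no_isolated :: "'a set \<Rightarrow> 'a set set \<Rightarrow> bool" where
  "no_isolated V E \<longleftrightarrow> (\<forall>x\<in>V. \<exists>y. {x, y} \<in> E)"

definition leaf :: "'a set \<Rightarrow> 'a set set \<Rightarrow> 'a \<Rightarrow> bool" where
  "leaf V E x \<longleftrightarrow> x \<in> V \<and> deg E x = 1"

definition support_vertex :: "'a set \<Rightarrow> 'a set set \<Rightarrow> 'a \<Rightarrow> bool" where
  "support_vertex V E x \<longleftrightarrow> x \<in> V \<and> (\<exists>y. {x, y} \<in> E \<and> leaf V E y)"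

definition trdf :: "'a set \<Rightarrow> 'a set set \<Rightarrow> ('a \<Rightarrow> nat) \<Rightarrow> bool" where
  "trdf V E f \<longleftrightarrow> (\<forall>x\<in>V. f x \<le> 2)
     \<and> (\<forall>x\<in>V. f x = 0 \<longrightarrow> (\<exists>y. {x, y} \<in> E \<and> f y = 2))
     \<and> (\<forall>x\<in>V. f x > 0 \<longrightarrow> (\<exists>y. {x, y} \<in> E \<and> f y > 0))"

definition gamma_tR :: "'a set \<Rightarrow> 'a set set \<Rightarrow> nat" where
  "gamma_tR V E = (LEAST w. \<exists>f. trdf V E f \<and> sum f V = w)"

definition gamma_tR_fun :: "'a set \<Rightarrow> 'a set set \<Rightarrow> ('a \<Rightarrow> nat) \<Rightarrow> bool" where
  "gamma_tR_fun V E f \<longleftrightarrow> trdf V E f \<and> sum f V = gamma_tR V E"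

text \<open>Total Roman bondage number; the infimum of the empty set is \<infinity>.\<close>
definition b_tR :: "'a set \<Rightarrow> 'a set set \<Rightarrow> enat" where
  "b_tR V E = (INF E' \<in> {E'. E' \<subseteq> E \<and> no_isolated V (E - E') \<and> gamma_tR V (E - E') > gamma_tR V E}.
                 enat (card E'))"

definition graph_iso :: "nat set \<Rightarrow> nat set set \<Rightarrow> 'a set \<Rightarrow> 'a set set \<Rightarrow> (nat \<Rightarrow> 'a) \<Rightarrow> bool" where
  "graph_iso V0 E0 V E \<phi> \<longleftrightarrow> bij_betw \<phi> V0 V \<and> E = (\<lambda>e. \<phi> ` e) ` E0"

definition star_V :: "nat \<Rightarrow> nat set" where "star_V r = {0..r}"
definition star_E :: "nat \<Rightarrow> nat set set" where "star_E r = {{0, i} | i. i \<in> {1..r}}"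

text \<open>Healthy spider S(0,r): head 0, middle vertices 1..r, feet r+1..2r (foot i+r below i).\<close>
definition spider_V :: "nat \<Rightarrow> nat set" where "spider_V r = {0..2*r}"
definition spider_E :: "nat \<Rightarrow> nat set set" where
  "spider_E r = {{0, i} | i. i \<in> {1..r}} \<union> {{i, i + r} | i. i \<in> {1..r}}"

definition cycle_V :: "nat \<Rightarrow> nat set" where "cycle_V n = {..<n}"
definition cycle_E :: "nat \<Rightarrow> nat set set" where "cycle_E n = {{i, Suc i mod n} | i. i < n}"
definition path_V :: "nat \<Rightarrow> nat set" where "path_V n = {..<n}"
definition path_E :: "nat \<Rightarrow> nat set set" where "path_E n = {{i, Suc i} | i. Suc i < n}"

end

theory Submission
  imports Defs
begin

(* Deleting F leaves the disjoint union of H and R, so gamma_tR(G - F) is at least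
   gamma_tR(H) + gamma_tR(R).  On the other hand, a gamma_tR(H)-function f and a function g on R
   that satisfies the TRDF conditions at every vertex except v and weighs less than gamma_tR(R)
   glue to a TRDF of G: the edge uv supplies v with the positive neighbour u, and with a
   neighbour of weight 2 if g v = 0 (whence f u = 2 for the spider).  Such g exist: 2 on the
   centre of a star, 1 off the head of a spider, and the pattern 0,2,0,1,...,1 of weight n - 1
   around v on cycles and paths, whose gamma_tR is n because their maximum degree is 2.  Hence
   gamma_tR(G) < gamma_tR(G - F).  Part (2) is the star case: R consists of v and its leaves,
   F of the edges from v to the rest H, and u is a support vertex of H, so every TRDF of H is
   positive at u. *)

definition trdf_at :: "'a set set \<Rightarrow> ('a \<Rightarrow> nat) \<Rightarrow> 'a \<Rightarrow> bool" where
  "trdf_at E f x \<longleftrightarrow> (f x = 0 \<longrightarrow> (\<exists>y. {x, y} \<in> E \<and> f y = 2))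
     \<and> (0 < f x \<longrightarrow> (\<exists>y. {x, y} \<in> E \<and> 0 < f y))"

definition trdf_except :: "'a set \<Rightarrow> 'a set set \<Rightarrow> 'a set \<Rightarrow> ('a \<Rightarrow> nat) \<Rightarrow> bool" where
  "trdf_except V E X f \<longleftrightarrow> (\<forall>x\<in>V. f x \<le> 2) \<and> (\<forall>x\<in>V - X. trdf_at E f x)"

definition subminimal_trdf_except :: "'a set \<Rightarrow> 'a set set \<Rightarrow> 'a \<Rightarrow> ('a \<Rightarrow> nat) \<Rightarrow> bool" where
  "subminimal_trdf_except V E v g \<longleftrightarrow> trdf_except V E {v} g \<and> sum g V < gamma_tR V E"

lemma trdf_iff_trdf_at: "trdf V E f \<longleftrightarrow> (\<forall>x\<in>V. f x \<le> 2 \<and> trdf_at E f x)"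
  unfolding trdf_def trdf_at_def by blast

lemma trdf_except_empty [simp]: "trdf_except V E {} f \<longleftrightarrow> trdf V E f"
  unfolding trdf_except_def trdf_iff_trdf_at by auto

lemma trdf_at_transfer:
  assumes "trdf_at E f x" "g x = f x" "\<And>y. {x, y} \<in> E \<Longrightarrow> {x, y} \<in> E' \<and> g y = f y"
  shows "trdf_at E' g x"
  using assms unfolding trdf_at_def by metis

lemma graph_finite: "graph V E \<Longrightarrow> finite V"
  unfolding graph_def by blast

lemma graph_edgeD:
  assumes "graph V E" "{x, y} \<in> E"
  shows "x \<in> V" "y \<in> V" "x \<noteq> y"
proof -
  obtain a b where "a \<in> V" "b \<in> V" "a \<noteq> b" "{x, y} = {a, b}"
    using assms unfolding graph_def by meson
  then show "x \<in> V" "y \<in> V" "x \<noteq> y"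
    by (auto simp: doubleton_eq_iff)
qed

lemma finite_neighbors: "graph V E \<Longrightarrow> finite {y. {x, y} \<in> E}"
  by (rule finite_subset[of _ V]) (auto dest: graph_edgeD graph_finite)

lemma leaf_neighbor_unique:
  assumes "leaf V E l" "{l, y} \<in> E" "{l, z} \<in> E"
  shows "y = z"
proof -
  obtain a where "{y. {l, y} \<in> E} = {a}"
    using assms(1) unfolding leaf_def deg_def by (auto simp: card_1_singleton_iff)
  then show ?thesis
    using assms(2,3) by (metis mem_Collect_eq singletonD)
qed

lemma leaf_subgraph:
  assumes "leaf V E l" "E' \<subseteq> E" "{l, u} \<in> E'" "l \<in> V'"
  shows "leaf V' E' l"
proof -
  have "{y. {l, y} \<in> E'} = {u}"
    using assms leaf_neighbor_unique[OF assms(1)] by blast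
  then show ?thesis
    using assms(4) unfolding leaf_def deg_def by simp
qed

lemma gamma_tR_le: "trdf V E f \<Longrightarrow> gamma_tR V E \<le> sum f V"
  unfolding gamma_tR_def by (rule Least_le) blast

lemma trdf_const_one: "no_isolated V E \<Longrightarrow> trdf V E (\<lambda>_. 1)"
  unfolding trdf_def no_isolated_def by auto

lemma gamma_tR_fun_exists:
  assumes "no_isolated V E"
  shows "\<exists>f. gamma_tR_fun V E f"
  using LeastI_ex[of "\<lambda>w. \<exists>f. trdf V E f \<and> sum f V = w"] trdf_const_one[OF assms]
  unfolding gamma_tR_fun_def gamma_tR_def by blast

lemma gamma_tR_ge:
  assumes "no_isolated V E" "\<And>f. trdf V E f \<Longrightarrow> k \<le> sum f V"
  shows "k \<le> gamma_tR V E"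
proof -
  obtain f where "trdf V E f" "sum f V = gamma_tR V E"
    using gamma_tR_fun_exists[OF assms(1)] unfolding gamma_tR_fun_def by blast
  then show ?thesis
    using assms(2)[of f] by simp
qed

lemma b_tR_le_card:
  assumes "E' \<subseteq> E" "no_isolated V (E - E')" "gamma_tR V E < gamma_tR V (E - E')"
  shows "b_tR V E \<le> enat (card E')"
  unfolding b_tR_def using assms by (intro INF_lower) simp

lemma trdf_support_vertex_pos:
  assumes f: "trdf V E f" and u: "support_vertex V E u"
  shows "0 < f u"
proof -
  obtain l where ul: "{u, l} \<in> E" and l: "leaf V E l"
    using u unfolding support_vertex_def by blast
  have lu: "{l, u} \<in> E"
    using ul by (simp add: insert_commute)
  have "l \<in> V"
    using l unfolding leaf_def by simp
  then have "trdf_at E f l"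
    using f unfolding trdf_iff_trdf_at by blast
  then obtain y where y: "{l, y} \<in> E" "0 < f y"
    unfolding trdf_at_def by (cases "f l = 0") auto
  have "y = u"
    using leaf_neighbor_unique[OF l y(1) lu] .
  then show ?thesis
    using y(2) by simp
qed

section \<open>Attaching a graph R to a graph H\<close>

lemma trdf_restrict:
  assumes "trdf V E f" "W \<subseteq> V" "\<And>x y. x \<in> W \<Longrightarrow> {x, y} \<in> E \<Longrightarrow> {x, y} \<in> E'"
  shows "trdf W E' f"
  using assms trdf_at_transfer[of E f _ f E'] unfolding trdf_iff_trdf_at by blast

lemma gamma_tR_disjoint_union_ge:
  assumes H: "graph VH EH" "no_isolated VH EH" and R: "graph VR ER" "no_isolated VR ER"
    and disj: "VH \<inter> VR = {}"
  shows "gamma_tR VH EH + gamma_tR VR ER \<le> gamma_tR (VH \<union> VR) (EH \<union> ER)"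
proof -
  have "no_isolated (VH \<union> VR) (EH \<union> ER)"
    using H(2) R(2) unfolding no_isolated_def by blast
  then obtain h where h: "trdf (VH \<union> VR) (EH \<union> ER) h"
    and sum_h: "sum h (VH \<union> VR) = gamma_tR (VH \<union> VR) (EH \<union> ER)"
    using gamma_tR_fun_exists unfolding gamma_tR_fun_def by blast
  have "trdf VH EH h"
    by (rule trdf_restrict[OF h]) (use disj graph_edgeD(1)[OF R(1)] in blast)+
  moreover have "trdf VR ER h"
    by (rule trdf_restrict[OF h]) (use disj graph_edgeD(1)[OF H(1)] in blast)+
  moreover have "sum h (VH \<union> VR) = sum h VH + sum h VR"
    using disj H(1) R(1) by (simp add: sum.union_disjoint graph_finite)
  ultimately show ?thesis
    using sum_h add_mono[OF gamma_tR_le gamma_tR_le] by metis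
qed

lemma trdf_glue:
  assumes H: "graph VH EH" and R: "graph VR ER" and disj: "VH \<inter> VR = {}"
    and f: "trdf VH EH f" and g: "trdf_except VR ER {v} g"
    and u: "u \<in> VH" "0 < f u" "g v = 0 \<Longrightarrow> f u = 2" and uv: "{u, v} \<in> F"
  shows "trdf (VH \<union> VR) (EH \<union> ER \<union> F) (\<lambda>x. if x \<in> VH then f x else g x)"
  unfolding trdf_iff_trdf_at
proof
  define w where "w x = (if x \<in> VH then f x else g x)" for x
  fix x assume x: "x \<in> VH \<union> VR"
  consider "x \<in> VH" | "x \<in> VR - {v}" | "x = v" "v \<in> VR"
    using x by blast
  then show "w x \<le> 2 \<and> trdf_at (EH \<union> ER \<union> F) w x"
    unfolding w_def[symmetric]
  proof cases
    case 1
    moreover have "y \<in> VH" if "{x, y} \<in> EH" for y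
      using graph_edgeD(2)[OF H that] .
    ultimately show ?thesis
      using f trdf_at_transfer[of EH f x w] unfolding trdf_iff_trdf_at w_def by auto
  next
    case 2
    moreover have "y \<notin> VH" if "{x, y} \<in> ER" for y
      using graph_edgeD(2)[OF R that] disj by blast
    ultimately show ?thesis
      using disj g trdf_at_transfer[of ER g x w] unfolding trdf_except_def w_def by auto
  next
    case 3
    have "{v, u} \<in> F"
      using uv by (simp add: insert_commute)
    then show ?thesis
      using 3 disj u g unfolding trdf_except_def trdf_at_def w_def by auto
  qed
qed

lemma b_tR_glue_le_card:
  assumes H: "graph VH EH" "no_isolated VH EH" and R: "graph VR ER" "no_isolated VR ER"
    and disj: "VH \<inter> VR = {}"
    and f: "gamma_tR_fun VH EH f" and u: "u \<in> VH" "0 < f u" "g v = 0 \<Longrightarrow> f u = 2"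
    and g: "subminimal_trdf_except VR ER v g"
    and F: "F \<inter> (EH \<union> ER) = {}" "{u, v} \<in> F"
  shows "b_tR (VH \<union> VR) (EH \<union> ER \<union> F) \<le> enat (card F)"
proof (rule b_tR_le_card)
  have remove_F: "EH \<union> ER \<union> F - F = EH \<union> ER"
    using F(1) by blast
  show "F \<subseteq> EH \<union> ER \<union> F"
    by blast
  show "no_isolated (VH \<union> VR) (EH \<union> ER \<union> F - F)"
    using H(2) R(2) unfolding remove_F no_isolated_def by blast
  have "trdf VH EH f" "trdf_except VR ER {v} g"
    using f g unfolding gamma_tR_fun_def subminimal_trdf_except_def by blast+
  note glued = trdf_glue[OF H(1) R(1) disj this u F(2)]
  have "(\<Sum>x\<in>VH \<union> VR. if x \<in> VH then f x else g x)
      = (\<Sum>x\<in>VH. if x \<in> VH then f x else g x) + (\<Sum>x\<in>VR. if x \<in> VH then f x else g x)"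
    using disj H(1) R(1) by (simp add: sum.union_disjoint graph_finite)
  also have "\<dots> = sum f VH + sum g VR"
    using disj by (intro arg_cong2[where f = "(+)"] sum.cong) auto
  finally have "gamma_tR (VH \<union> VR) (EH \<union> ER \<union> F) \<le> sum f VH + sum g VR"
    using gamma_tR_le[OF glued] by simp
  also have "\<dots> < gamma_tR VH EH + gamma_tR VR ER"
    using f g unfolding gamma_tR_fun_def subminimal_trdf_except_def by simp
  also have "\<dots> \<le> gamma_tR (VH \<union> VR) (EH \<union> ER \<union> F - F)"
    unfolding remove_F by (rule gamma_tR_disjoint_union_ge[OF H R disj])
  finally show "gamma_tR (VH \<union> VR) (EH \<union> ER \<union> F) < gamma_tR (VH \<union> VR) (EH \<union> ER \<union> F - F)" .
qed

section \<open>Transfer along isomorphisms from model graphs\<close>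

lemma graph_iso_edge_iff:
  assumes G0: "graph V0 E0" and iso: "graph_iso V0 E0 V E \<phi>" and i: "i \<in> V0"
  shows "{\<phi> i, y} \<in> E \<longleftrightarrow> (\<exists>j. {i, j} \<in> E0 \<and> y = \<phi> j)"
proof
  have inj: "inj_on \<phi> V0" and E: "E = (\<lambda>e. \<phi> ` e) ` E0"
    using iso unfolding graph_iso_def bij_betw_def by auto
  assume "{\<phi> i, y} \<in> E"
  then obtain e where e: "e \<in> E0" "{\<phi> i, y} = \<phi> ` e"
    unfolding E by blast
  then obtain a b where ab: "e = {a, b}" "a \<in> V0" "b \<in> V0"
    using G0 unfolding graph_def by blast
  have "\<phi> i = \<phi> a \<and> y = \<phi> b \<or> \<phi> i = \<phi> b \<and> y = \<phi> a"
    using e(2) unfolding ab(1) by (simp add: doubleton_eq_iff)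
  then have "i = a \<and> y = \<phi> b \<or> i = b \<and> y = \<phi> a"
    using inj i ab(2,3) by (auto dest: inj_onD)
  moreover have "{a, b} \<in> E0" "{b, a} \<in> E0"
    using e(1) ab(1) by (simp_all add: insert_commute)
  ultimately show "\<exists>j. {i, j} \<in> E0 \<and> y = \<phi> j"
    by blast
next
  assume "\<exists>j. {i, j} \<in> E0 \<and> y = \<phi> j"
  then obtain j where j: "{i, j} \<in> E0" "y = \<phi> j"
    by blast
  have "\<phi> ` {i, j} \<in> (\<lambda>e. \<phi> ` e) ` E0"
    using j(1) by (rule imageI)
  then show "{\<phi> i, y} \<in> E"
    using iso j(2) unfolding graph_iso_def by simp
qed

lemma graph_iso_graph:
  assumes G0: "graph V0 E0" and iso: "graph_iso V0 E0 V E \<phi>"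
  shows "graph V E"
proof -
  have inj: "inj_on \<phi> V0" and V: "V = \<phi> ` V0" and E: "E = (\<lambda>e. \<phi> ` e) ` E0"
    using iso unfolding graph_iso_def bij_betw_def by auto
  have "\<exists>x y. x \<in> V \<and> y \<in> V \<and> x \<noteq> y \<and> e = {x, y}" if "e \<in> E" for e
  proof -
    obtain a b where "a \<in> V0" "b \<in> V0" "a \<noteq> b" "e = {\<phi> a, \<phi> b}"
      using \<open>e \<in> E\<close> G0 unfolding E graph_def by fastforce
    then show ?thesis
      using inj unfolding V by (auto simp: inj_on_eq_iff)
  qed
  then show ?thesis
    using graph_finite[OF G0] unfolding graph_def V by blast
qed

lemma graph_iso_no_isolated:
  assumes G0: "graph V0 E0" and iso: "graph_iso V0 E0 V E \<phi>" and ni: "no_isolated V0 E0"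
  shows "no_isolated V E"
proof -
  have "V = \<phi> ` V0"
    using iso unfolding graph_iso_def bij_betw_def by auto
  then show ?thesis
    using ni graph_iso_edge_iff[OF G0 iso] unfolding no_isolated_def by blast
qed

lemma graph_iso_comp:
  assumes "graph_iso V0 E0 V0 E0 \<sigma>" "graph_iso V0 E0 V E \<phi>"
  shows "graph_iso V0 E0 V E (\<phi> \<circ> \<sigma>)"
proof -
  have "bij_betw \<sigma> V0 V0" "(\<lambda>e. \<sigma> ` e) ` E0 = E0" "bij_betw \<phi> V0 V" "E = (\<lambda>e. \<phi> ` e) ` E0"
    using assms unfolding graph_iso_def by simp_all
  moreover have "(\<lambda>e. (\<phi> \<circ> \<sigma>) ` e) ` E0 = (\<lambda>e. \<phi> ` e) ` (\<lambda>e. \<sigma> ` e) ` E0"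
    by (simp add: image_comp)
  ultimately show ?thesis
    unfolding graph_iso_def using bij_betw_trans by metis
qed

lemma deg_graph_iso:
  assumes G0: "graph V0 E0" and iso: "graph_iso V0 E0 V E \<phi>" and i: "i \<in> V0"
  shows "deg E (\<phi> i) = deg E0 i"
proof -
  have "{y. {\<phi> i, y} \<in> E} = \<phi> ` {j. {i, j} \<in> E0}"
    using graph_iso_edge_iff[OF G0 iso i] by blast
  moreover have "inj_on \<phi> {j. {i, j} \<in> E0}"
    using iso graph_edgeD(2)[OF G0] unfolding graph_iso_def bij_betw_def
    by (meson inj_on_subset mem_Collect_eq subsetI)
  ultimately show ?thesis
    unfolding deg_def by (simp add: card_image)
qed

lemma support_vertex_graph_isoD:
  assumes G0: "graph V0 E0" and iso: "graph_iso V0 E0 V E \<phi>" and i: "i \<in> V0"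
    and sv: "support_vertex V E (\<phi> i)"
  shows "support_vertex V0 E0 i"
proof -
  obtain y where y: "{\<phi> i, y} \<in> E" "leaf V E y"
    using sv unfolding support_vertex_def by blast
  then obtain j where j: "{i, j} \<in> E0" "y = \<phi> j"
    using graph_iso_edge_iff[OF G0 iso i] by blast
  have "j \<in> V0"
    using graph_edgeD(2)[OF G0 j(1)] .
  then have "leaf V0 E0 j"
    using y(2) j(2) deg_graph_iso[OF G0 iso] unfolding leaf_def by simp
  then show ?thesis
    using i j(1) unfolding support_vertex_def by blast
qed

lemma sum_graph_iso: "graph_iso V0 E0 V E \<phi> \<Longrightarrow> sum h V = sum (h \<circ> \<phi>) V0"
  unfolding graph_iso_def using sum.reindex_bij_betw[of \<phi> V0 V h] by (simp add: comp_def)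

lemma trdf_except_iso_iff:
  assumes G0: "graph V0 E0" and iso: "graph_iso V0 E0 V E \<phi>" and X: "X \<subseteq> V0"
  shows "trdf_except V E (\<phi> ` X) g \<longleftrightarrow> trdf_except V0 E0 X (g \<circ> \<phi>)"
proof -
  have inj: "inj_on \<phi> V0" and V: "V = \<phi> ` V0"
    using iso unfolding graph_iso_def bij_betw_def by auto
  have V_diff: "V - \<phi> ` X = \<phi> ` (V0 - X)"
    unfolding V using inj X by (simp add: inj_on_image_set_diff)
  have nbr: "(\<exists>y. {\<phi> i, y} \<in> E \<and> P y) \<longleftrightarrow> (\<exists>j. {i, j} \<in> E0 \<and> P (\<phi> j))"
    if "i \<in> V0" for i P
    by (auto simp: graph_iso_edge_iff[OF G0 iso that])
  show ?thesis
    unfolding trdf_except_def trdf_at_def V_diff unfolding V by (simp add: nbr)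
qed

lemma trdf_except_cong:
  assumes f: "trdf_except V E X f" and G: "graph V E" and fg: "\<And>x. x \<in> V \<Longrightarrow> g x = f x"
  shows "trdf_except V E X g"
proof -
  have "g y = f y" if "{x, y} \<in> E" for x y
    using fg graph_edgeD(2)[OF G that] .
  then show ?thesis
    using f fg trdf_at_transfer[of E f _ g E] unfolding trdf_except_def by auto
qed

lemma trdf_except_iso_transfer:
  assumes G0: "graph V0 E0" and iso: "graph_iso V0 E0 V E \<phi>" and X: "X \<subseteq> V0"
    and g0: "trdf_except V0 E0 X g0"
  shows "trdf_except V E (\<phi> ` X) (g0 \<circ> inv_into V0 \<phi>)"
    and "sum (g0 \<circ> inv_into V0 \<phi>) V = sum g0 V0"
proof -
  have bij: "bij_betw \<phi> V0 V"
    using iso unfolding graph_iso_def by simp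
  have inv: "(g0 \<circ> inv_into V0 \<phi> \<circ> \<phi>) i = g0 i" if "i \<in> V0" for i
    using bij that by (simp add: bij_betw_def)
  have "trdf_except V0 E0 X (g0 \<circ> inv_into V0 \<phi> \<circ> \<phi>)"
    using g0 G0 inv by (rule trdf_except_cong)
  then show "trdf_except V E (\<phi> ` X) (g0 \<circ> inv_into V0 \<phi>)"
    unfolding trdf_except_iso_iff[OF G0 iso X] .
  have "sum (g0 \<circ> inv_into V0 \<phi>) V = sum (g0 \<circ> inv_into V0 \<phi> \<circ> \<phi>) V0"
    using iso by (rule sum_graph_iso)
  also have "\<dots> = sum g0 V0"
    using inv by (rule sum.cong[OF refl])
  finally show "sum (g0 \<circ> inv_into V0 \<phi>) V = sum g0 V0" .
qed

lemma gamma_tR_iso: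
  assumes G0: "graph V0 E0" and ni: "no_isolated V0 E0" and iso: "graph_iso V0 E0 V E \<phi>"
  shows "gamma_tR V E = gamma_tR V0 E0"
proof (rule antisym)
  obtain g0 where g0: "trdf V0 E0 g0" "sum g0 V0 = gamma_tR V0 E0"
    using gamma_tR_fun_exists[OF ni] unfolding gamma_tR_fun_def by blast
  have "trdf_except V0 E0 {} g0"
    using g0(1) by simp
  note pushed = trdf_except_iso_transfer[OF G0 iso empty_subsetI this]
  show "gamma_tR V E \<le> gamma_tR V0 E0"
    using gamma_tR_le[OF pushed(1)[simplified]] pushed(2) g0(2) by simp
  show "gamma_tR V0 E0 \<le> gamma_tR V E"
  proof (rule gamma_tR_ge[OF graph_iso_no_isolated[OF G0 iso ni]])
    fix h assume "trdf V E h"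
    then have "trdf V0 E0 (h \<circ> \<phi>)"
      using trdf_except_iso_iff[OF G0 iso empty_subsetI, of h] by simp
    then show "gamma_tR V0 E0 \<le> sum h V"
      unfolding sum_graph_iso[OF iso] by (rule gamma_tR_le)
  qed
qed

lemma subminimal_trdf_except_iso:
  assumes G0: "graph V0 E0" and ni: "no_isolated V0 E0" and iso: "graph_iso V0 E0 V E \<phi>"
    and i: "i \<in> V0" and g0: "subminimal_trdf_except V0 E0 i g0"
  shows "subminimal_trdf_except V E (\<phi> i) (g0 \<circ> inv_into V0 \<phi>)"
proof -
  have "trdf_except V0 E0 {i} g0"
    using g0 unfolding subminimal_trdf_except_def by blast
  note pushed = trdf_except_iso_transfer[OF G0 iso _ this]
  show ?thesis
    using pushed i g0 gamma_tR_iso[OF G0 ni iso] unfolding subminimal_trdf_except_def by simp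
qed

lemma b_tR_glue_iso_le_card:
  assumes G0: "graph V0 E0" "no_isolated V0 E0" and i: "i \<in> V0"
    and g0: "subminimal_trdf_except V0 E0 i g0" and iso: "graph_iso V0 E0 VR ER \<phi>"
    and H: "graph VH EH" "no_isolated VH EH" and disj: "VH \<inter> VR = {}"
    and u: "u \<in> VH" and F: "F \<inter> (EH \<union> ER) = {}" "{u, \<phi> i} \<in> F"
    and f: "gamma_tR_fun VH EH f" "0 < f u" "g0 i = 0 \<Longrightarrow> f u = 2"
  shows "b_tR (VH \<union> VR) (EH \<union> ER \<union> F) \<le> enat (card F)"
proof (rule b_tR_glue_le_card[OF H graph_iso_graph[OF G0(1) iso]
      graph_iso_no_isolated[OF G0(1) iso G0(2)] disj f(1) u f(2) _
      subminimal_trdf_except_iso[OF G0 iso i g0] F])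
  have "inv_into V0 \<phi> (\<phi> i) = i"
    using iso i unfolding graph_iso_def bij_betw_def by simp
  then show "(g0 \<circ> inv_into V0 \<phi>) (\<phi> i) = 0 \<Longrightarrow> f u = 2"
    using f(3) by simp
qed

section \<open>Graphs of maximum degree two\<close>

lemma sum_add_card_zeros:
  assumes "finite V" "\<And>x. x \<in> V \<Longrightarrow> h x \<le> (2::nat)"
  shows "sum h V + card {x \<in> V. h x = 0} = card V + card {x \<in> V. h x = 2}"
proof -
  have "h x + of_bool (h x = 0) = 1 + of_bool (h x = 2)" if "x \<in> V" for x
    using assms(2)[OF that] by (auto simp: le_Suc_eq numeral_2_eq_2)
  then have "(\<Sum>x\<in>V. h x + of_bool (h x = 0)) = (\<Sum>x\<in>V. 1 + of_bool (h x = 2))"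
    by (rule sum.cong[OF refl])
  then have "sum h V + (\<Sum>x\<in>V. of_bool (h x = 0)) = card V + (\<Sum>x\<in>V. of_bool (h x = 2))"
    by (simp only: sum.distrib card_eq_sum)
  then show ?thesis
    using assms(1) by (simp add: Int_def)
qed

text \<open>Each vertex of weight 0 picks a neighbour of weight 2; since that neighbour also needs a
  positive neighbour and has at most two neighbours, no two vertices pick the same one.\<close>
lemma card_le_trdf_weight_if_deg_le_2:
  assumes G: "graph V E" and deg: "\<And>x. x \<in> V \<Longrightarrow> deg E x \<le> 2" and h: "trdf V E h"
  shows "card V \<le> sum h V"
proof -
  define Z where "Z = {x \<in> V. h x = 0}"
  define T where "T = {x \<in> V. h x = 2}"
  have fin: "finite V"
    using G by (rule graph_finite)
  have "\<forall>z\<in>Z. \<exists>t. {z, t} \<in> E \<and> h t = 2"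
    using h unfolding Z_def trdf_def by blast
  then obtain p where p: "\<And>z. z \<in> Z \<Longrightarrow> {z, p z} \<in> E \<and> h (p z) = 2"
    by metis
  have "p ` Z \<subseteq> T"
    using p graph_edgeD(2)[OF G] unfolding T_def by blast
  moreover have "inj_on p Z"
  proof (rule inj_onI, rule ccontr)
    fix z1 z2 assume z: "z1 \<in> Z" "z2 \<in> Z" "p z1 = p z2" "z1 \<noteq> z2"
    define t where "t = p z1"
    have t: "t \<in> V" "h t = 2" "{t, z1} \<in> E" "{t, z2} \<in> E"
      using p[OF z(1)] p[OF z(2)] graph_edgeD(2)[OF G] z(3) unfolding t_def
      by (simp_all add: insert_commute)
    then obtain w where w: "{t, w} \<in> E" "0 < h w"
      using h unfolding trdf_def by auto
    have "w \<noteq> z1" "w \<noteq> z2"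
      using w(2) z(1,2) unfolding Z_def by auto
    then have "card {z1, z2, w} = 3"
      using z(4) by simp
    moreover have "{z1, z2, w} \<subseteq> {y. {t, y} \<in> E}"
      using t w by simp
    ultimately have "3 \<le> deg E t"
      unfolding deg_def by (metis card_mono finite_neighbors[OF G])
    then show False
      using deg[OF t(1)] by simp
  qed
  ultimately have "card Z \<le> card T"
    using fin unfolding T_def by (simp add: card_inj_on_le)
  moreover have "sum h V + card Z = card V + card T"
    unfolding Z_def T_def using h by (intro sum_add_card_zeros[OF fin]) (simp add: trdf_def)
  ultimately show ?thesis
    by linarith
qed

section \<open>Stars\<close>

definition star_edges :: "'a \<Rightarrow> 'a set \<Rightarrow> 'a set set" where
  "star_edges c L = {{c, l} | l. l \<in> L}"

lemma star_edges_iff: "{x, y} \<in> star_edges c L \<longleftrightarrow> x = c \<and> y \<in> L \<or> y = c \<and> x \<in> L"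
  unfolding star_edges_def by (auto simp: doubleton_eq_iff)

lemma graph_star_edges:
  assumes "finite L" "c \<notin> L"
  shows "graph (insert c L) (star_edges c L)"
  using assms unfolding graph_def star_edges_def by blast

lemma no_isolated_star_edges:
  assumes "L \<noteq> {}"
  shows "no_isolated (insert c L) (star_edges c L)"
  using assms unfolding no_isolated_def star_edges_iff by blast

lemma star_edges_trdf_weight_ge:
  assumes c: "c \<notin> L" and L: "finite L" "2 \<le> card L"
    and h: "trdf (insert c L) (star_edges c L) h"
  shows "3 \<le> sum h (insert c L)"
proof -
  have sum_h: "sum h (insert c L) = h c + sum h L"
    using c L(1) by simp
  have leaf_nbr: "y = c" if "l \<in> L" "{l, y} \<in> star_edges c L" for l y
    using that c unfolding star_edges_iff by blast
  show ?thesis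
  proof (cases "h c = 2")
    case True
    then obtain l where "{c, l} \<in> star_edges c L" "0 < h l"
      using h unfolding trdf_def by auto
    moreover have "h l \<le> sum h L" if "l \<in> L" for l
      using L(1) that by (simp add: member_le_sum)
    ultimately show ?thesis
      using sum_h True c unfolding star_edges_iff by fastforce
  next
    case False
    have pos: "0 < h l \<and> 0 < h c" if l: "l \<in> L" for l
    proof -
      have "h l = 0 \<longrightarrow> (\<exists>y. {l, y} \<in> star_edges c L \<and> h y = 2)"
        "0 < h l \<longrightarrow> (\<exists>y. {l, y} \<in> star_edges c L \<and> 0 < h y)"
        using h l unfolding trdf_def by blast+
      then show ?thesis
        using leaf_nbr[OF l] False by (cases "h l = 0") auto
    qed
    have "card L \<le> sum h L"
      using pos card_eq_sum[of L] sum_mono[of L "\<lambda>_. 1" h] by (simp add: Suc_le_eq)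
    moreover obtain l where "l \<in> L"
      using L(2) by fastforce
    ultimately show ?thesis
      using sum_h pos L(2) by fastforce
  qed
qed

lemma subminimal_trdf_except_star_center:
  assumes c: "c \<notin> L" and L: "finite L" "2 \<le> card L"
  shows "subminimal_trdf_except (insert c L) (star_edges c L) c (\<lambda>x. if x = c then 2 else 0)"
proof -
  have "L \<noteq> {}"
    using L(2) by auto
  then have "3 \<le> gamma_tR (insert c L) (star_edges c L)"
    using gamma_tR_ge no_isolated_star_edges star_edges_trdf_weight_ge[OF assms] by metis
  moreover have "(\<Sum>x\<in>insert c L. if x = c then 2 else 0) = (2::nat)"
    using c L(1) by (simp add: sum.If_cases)
  moreover have "trdf_except (insert c L) (star_edges c L) {c} (\<lambda>x. if x = c then 2 else 0)"
    using c unfolding trdf_except_def trdf_at_def star_edges_iff by auto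
  ultimately show ?thesis
    unfolding subminimal_trdf_except_def by simp
qed

lemma star_template:
  assumes r: "2 \<le> r"
  shows "graph (star_V r) (star_E r)" "no_isolated (star_V r) (star_E r)" "0 \<in> star_V r"
    "subminimal_trdf_except (star_V r) (star_E r) 0 (\<lambda>k. if k = 0 then 2 else 0)"
proof -
  have V: "star_V r = insert 0 {1..r}"
    unfolding star_V_def by auto
  have E: "star_E r = star_edges 0 {1..r}"
    unfolding star_E_def star_edges_def ..
  have L: "0 \<notin> {1..r}" "finite {1..r}" "2 \<le> card {1..r}" "{1..r} \<noteq> {}"
    using r by auto
  show "graph (star_V r) (star_E r)" "no_isolated (star_V r) (star_E r)" "0 \<in> star_V r"
    "subminimal_trdf_except (star_V r) (star_E r) 0 (\<lambda>k. if k = 0 then 2 else 0)"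
    unfolding V E using graph_star_edges[OF L(2,1)] no_isolated_star_edges[OF L(4)]
      subminimal_trdf_except_star_center[OF L(1-3)] by simp_all
qed

section \<open>Healthy spiders\<close>

lemma spider_edge_iff: "{x, y} \<in> spider_E r \<longleftrightarrow>
    x = 0 \<and> y \<in> {1..r} \<or> y = 0 \<and> x \<in> {1..r} \<or> x \<in> {1..r} \<and> y = x + r \<or> y \<in> {1..r} \<and> x = y + r"
  unfolding spider_E_def by (auto simp: doubleton_eq_iff)

lemma spider_sum: "sum h (spider_V r) = h 0 + (\<Sum>i=1..r. h i + h (i + r))"
proof -
  have "sum h (spider_V r) = h 0 + sum h {1..r + r}"
    unfolding spider_V_def mult_2 by (simp add: sum.atLeast_Suc_atMost)
  also have "sum h {1..r + r} = sum h {1..r} + sum h {r + 1..r + r}"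
    by (rule sum.ub_add_nat) simp
  also have "sum h {r + 1..r + r} = (\<Sum>i=1..r. h (i + r))"
    using sum.shift_bounds_cl_nat_ivl[of h 1 r r] by (simp add: add.commute)
  finally show ?thesis
    by (simp add: sum.distrib)
qed

lemma graph_spider: "graph (spider_V r) (spider_E r)"
proof -
  have "\<exists>x y. x \<in> spider_V r \<and> y \<in> spider_V r \<and> x \<noteq> y \<and> e = {x, y}"
    if e: "e \<in> spider_E r" for e
  proof -
    consider i where "i \<in> {1..r}" "e = {0, i}" | i where "i \<in> {1..r}" "e = {i, i + r}"
      using e unfolding spider_E_def by blast
    then show ?thesis
    proof cases
      case 1
      then show ?thesis
        unfolding spider_V_def by (intro exI[of _ 0] exI[of _ i]) auto
    next
      case 2
      then show ?thesis
        unfolding spider_V_def by (intro exI[of _ i] exI[of _ "i + r"]) auto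
    qed
  qed
  then show ?thesis
    unfolding graph_def spider_V_def by simp
qed

lemma spider_neighbor:
  assumes "1 \<le> r" "x \<in> spider_V r"
  shows "{x, if x = 0 then 1 else if x \<le> r then x + r else x - r} \<in> spider_E r"
  using assms unfolding spider_V_def spider_edge_iff by auto

lemma spider_leg_weight_ge:
  assumes h: "trdf (spider_V r) (spider_E r) h" and i: "i \<in> {1..r}"
  shows "2 \<le> h i + h (i + r)"
proof -
  have "i + r \<in> spider_V r"
    using i unfolding spider_V_def by simp
  then obtain y where "{i + r, y} \<in> spider_E r" "h y = 2 \<or> 0 < h y \<and> 0 < h (i + r)"
    using h unfolding trdf_def by (cases "h (i + r) = 0") auto
  moreover have "y = i" if "{i + r, y} \<in> spider_E r" for y
    using that i unfolding spider_edge_iff by auto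
  ultimately show ?thesis
    by fastforce
qed

lemma spider_trdf_weight_ge:
  assumes h: "trdf (spider_V r) (spider_E r) h"
  shows "2 * r + 1 \<le> sum h (spider_V r)"
proof (cases "h 0 = 0")
  case False
  have "(\<Sum>i=1..r. 2) \<le> (\<Sum>i=1..r. h i + h (i + r))"
    using spider_leg_weight_ge[OF h] by (rule sum_mono)
  then show ?thesis
    using False spider_sum[of h r] by simp
next
  case True
  (* the head is dominated by a middle vertex y, whose positive neighbour must be its foot *)
  have "0 \<in> spider_V r"
    unfolding spider_V_def by simp
  then obtain y where y: "{0, y} \<in> spider_E r" "h y = 2"
    using h True unfolding trdf_def by auto
  then have y_leg: "y \<in> {1..r}" "y \<in> spider_V r"
    unfolding spider_edge_iff spider_V_def by auto
  then obtain z where z: "{y, z} \<in> spider_E r" "0 < h z"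
    using h y(2) unfolding trdf_def by fastforce
  then have "z = y + r"
    using True y_leg(1) unfolding spider_edge_iff by auto
  then have "\<And>i. i \<in> {1..r} \<Longrightarrow> 2 + of_bool (i = y) \<le> h i + h (i + r)"
    using spider_leg_weight_ge[OF h] y(2) z(2) by fastforce
  then have "(\<Sum>i=1..r. 2 + of_bool (i = y)) \<le> (\<Sum>i=1..r. h i + h (i + r))"
    by (rule sum_mono)
  moreover have "{1..r} \<inter> {i. i = y} = {y}"
    using y_leg(1) by auto
  then have "(\<Sum>i=1..r. 2 + of_bool (i = y)) = 2 * r + (1::nat)"
    unfolding sum.distrib by simp
  ultimately show ?thesis
    using spider_sum[of h r] by simp
qed

lemma spider_template:
  assumes r: "1 \<le> r"
  shows "graph (spider_V r) (spider_E r)" "no_isolated (spider_V r) (spider_E r)" "0 \<in> spider_V r"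
    "subminimal_trdf_except (spider_V r) (spider_E r) 0 (\<lambda>k. if k = 0 then 0 else 1)"
proof -
  show "graph (spider_V r) (spider_E r)"
    by (rule graph_spider)
  show ni: "no_isolated (spider_V r) (spider_E r)"
    using spider_neighbor[OF r] unfolding no_isolated_def by blast
  show "0 \<in> spider_V r"
    unfolding spider_V_def by simp
  have "trdf_except (spider_V r) (spider_E r) {0} (\<lambda>k. if k = 0 then 0 else 1)"
    unfolding trdf_except_def trdf_at_def
  proof (intro conjI ballI impI)
    fix x assume x: "x \<in> spider_V r - {0}"
    then have "{x, if x \<le> r then x + r else x - r} \<in> spider_E r"
      using spider_neighbor[OF r, of x] by simp
    moreover have "(if x \<le> r then x + r else x - r) \<noteq> 0"
      using x r by simp
    ultimately show "\<exists>y. {x, y} \<in> spider_E r \<and> 0 < (if y = 0 then 0 else 1::nat)"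
      by auto
  qed auto
  moreover have "(\<Sum>k\<in>spider_V r. if k = 0 then 0 else 1) = 2 * r"
    unfolding spider_sum by simp
  moreover have "2 * r + 1 \<le> gamma_tR (spider_V r) (spider_E r)"
    using gamma_tR_ge[OF ni] spider_trdf_weight_ge by blast
  ultimately show "subminimal_trdf_except (spider_V r) (spider_E r) 0 (\<lambda>k. if k = 0 then 0 else 1)"
    unfolding subminimal_trdf_except_def by simp
qed

section \<open>Cycles\<close>

lemma cycle_edge_iff: "{x, y} \<in> cycle_E n \<longleftrightarrow> x < n \<and> y = Suc x mod n \<or> y < n \<and> x = Suc y mod n"
  unfolding cycle_E_def by (auto simp: doubleton_eq_iff)

lemma graph_cycle:
  assumes "2 \<le> n"
  shows "graph (cycle_V n) (cycle_E n)"
proof -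
  have "\<exists>x y. x \<in> cycle_V n \<and> y \<in> cycle_V n \<and> x \<noteq> y \<and> e = {x, y}"
    if e: "e \<in> cycle_E n" for e
  proof -
    obtain i where "i < n" "e = {i, Suc i mod n}"
      using e unfolding cycle_E_def by blast
    then show ?thesis
      using assms unfolding cycle_V_def
      by (intro exI[of _ i] exI[of _ "Suc i mod n"]) (auto simp: mod_Suc)
  qed
  then show ?thesis
    unfolding graph_def cycle_V_def by simp
qed

lemma no_isolated_cycle: "no_isolated (cycle_V n) (cycle_E n)"
  unfolding no_isolated_def cycle_V_def cycle_edge_iff by blast

lemma deg_cycle_le_2:
  assumes "x < n"
  shows "deg (cycle_E n) x \<le> 2"
proof -
  have "{y. {x, y} \<in> cycle_E n} \<subseteq> {Suc x mod n, if x = 0 then n - 1 else x - 1}"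
    using assms unfolding cycle_edge_iff by (auto simp: mod_Suc split: if_splits)
  then have "deg (cycle_E n) x \<le> card {Suc x mod n, if x = 0 then n - 1 else x - 1}"
    unfolding deg_def by (rule card_mono[rotated]) simp
  also have "\<dots> \<le> 2"
    by (simp add: card_insert_le_m1)
  finally show ?thesis .
qed

lemma gamma_tR_cycle_ge:
  assumes "2 \<le> n"
  shows "n \<le> gamma_tR (cycle_V n) (cycle_E n)"
proof (rule gamma_tR_ge[OF no_isolated_cycle])
  fix h assume "trdf (cycle_V n) (cycle_E n) h"
  then show "n \<le> sum h (cycle_V n)"
    using card_le_trdf_weight_if_deg_le_2[OF graph_cycle[OF assms]] deg_cycle_le_2
    unfolding cycle_V_def by simp
qed

lemma trdf_except_cycle:
  assumes n: "5 \<le> n"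
  shows "trdf_except (cycle_V n) (cycle_E n) {0}
    (\<lambda>k. if k = 0 then 2 else if k = 1 \<or> k = n - 1 then 0 else 1)"
  (is "trdf_except _ _ _ ?g")
  unfolding trdf_except_def trdf_at_def
proof (intro conjI ballI impI)
  show "?g x \<le> 2" for x
    by simp
next
  fix x assume x: "x \<in> cycle_V n - {0}"
  show "\<exists>y. {x, y} \<in> cycle_E n \<and> ?g y = 2" if "?g x = 0"
  proof -
    have "x = 1 \<or> x = n - 1"
      using that x by (auto split: if_splits)
    then have "{x, 0} \<in> cycle_E n"
      using n unfolding cycle_edge_iff by auto
    then show ?thesis
      by auto
  qed
  show "\<exists>y. {x, y} \<in> cycle_E n \<and> 0 < ?g y" if "0 < ?g x"
  proof -
    have x': "2 \<le> x" "x \<le> n - 2"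
      using that x unfolding cycle_V_def by (auto split: if_splits)
    define y where "y = (if x = n - 2 then x - 1 else x + 1)"
    have "{x, y} \<in> cycle_E n" "0 < ?g y"
      using n x' unfolding y_def cycle_edge_iff by auto
    then show ?thesis
      by blast
  qed
qed

lemma cycle_template:
  assumes n: "5 \<le> n"
  shows "graph (cycle_V n) (cycle_E n)" "no_isolated (cycle_V n) (cycle_E n)" "0 \<in> cycle_V n"
    "subminimal_trdf_except (cycle_V n) (cycle_E n) 0
       (\<lambda>k. if k = 0 then 2 else if k = 1 \<or> k = n - 1 then 0 else 1)"
proof -
  let ?g = "\<lambda>k. if k = 0 then 2 else if k = 1 \<or> k = n - 1 then 0 else (1::nat)"
  show "graph (cycle_V n) (cycle_E n)" "no_isolated (cycle_V n) (cycle_E n)" "0 \<in> cycle_V n"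
    using n graph_cycle no_isolated_cycle unfolding cycle_V_def by simp_all
  have "cycle_V n = {0, 1, n - 1} \<union> {2..<n - 1}"
    using n unfolding cycle_V_def by auto
  then have "sum ?g (cycle_V n) = sum ?g {0, 1, n - 1} + sum ?g {2..<n - 1}"
    by (simp only:) (rule sum.union_disjoint, auto)
  also have "sum ?g {2..<n - 1} = sum (\<lambda>_. 1) {2..<n - 1}"
    by (rule sum.cong) auto
  finally have "sum ?g (cycle_V n) < n"
    using n by simp
  then show "subminimal_trdf_except (cycle_V n) (cycle_E n) 0 ?g"
    using trdf_except_cycle[OF n] gamma_tR_cycle_ge[of n] n
    unfolding subminimal_trdf_except_def by simp
qed

lemma cycle_rotation_iso:
  assumes "0 < n"
  shows "graph_iso (cycle_V n) (cycle_E n) (cycle_V n) (cycle_E n) (\<lambda>k. Suc k mod n)"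
proof -
  let ?\<rho> = "\<lambda>k. Suc k mod n"
  have inj: "inj_on ?\<rho> {..<n}"
    by (rule inj_onI) (auto simp: mod_Suc split: if_splits)
  have "?\<rho> ` {..<n} \<subseteq> {..<n}"
    using assms by auto
  then have onto: "?\<rho> ` {..<n} = {..<n}"
    using endo_inj_surj[OF _ _ inj] by simp
  have E: "cycle_E n = (\<lambda>i. {i, Suc i mod n}) ` {..<n}"
    unfolding cycle_E_def by blast
  have "(\<lambda>e. ?\<rho> ` e) ` cycle_E n = (\<lambda>i. {i, Suc i mod n}) ` (?\<rho> ` {..<n})"
    unfolding E image_image by simp
  then show ?thesis
    unfolding graph_iso_def bij_betw_def cycle_V_def onto using inj E by simp
qed

lemma cycle_iso_at_vertex:
  assumes n: "0 < n" and iso: "graph_iso (cycle_V n) (cycle_E n) VR ER \<phi>" and v: "v \<in> VR"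
  obtains \<psi> where "graph_iso (cycle_V n) (cycle_E n) VR ER \<psi>" "v = \<psi> 0"
proof -
  let ?\<rho> = "\<lambda>k. Suc k mod n"
  have rotated: "graph_iso (cycle_V n) (cycle_E n) VR ER (\<phi> \<circ> ?\<rho> ^^ i) \<and> (?\<rho> ^^ i) 0 = i mod n"
    for i
  proof (induction i)
    case 0
    show ?case
      using iso by simp
  next
    case (Suc i)
    have "graph_iso (cycle_V n) (cycle_E n) VR ER ((\<phi> \<circ> ?\<rho> ^^ i) \<circ> ?\<rho>)"
      using graph_iso_comp[OF cycle_rotation_iso[OF n]] Suc by blast
    moreover have "(\<phi> \<circ> ?\<rho> ^^ i) \<circ> ?\<rho> = \<phi> \<circ> ?\<rho> ^^ Suc i"
      by (rule ext) (simp add: funpow_swap1[of ?\<rho>])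
    ultimately have "graph_iso (cycle_V n) (cycle_E n) VR ER (\<phi> \<circ> ?\<rho> ^^ Suc i)"
      by (simp only:)
    moreover have "(?\<rho> ^^ Suc i) 0 = Suc i mod n"
      using Suc by (simp add: mod_Suc_eq)
    ultimately show ?case ..
  qed
  obtain i where "i < n" "v = \<phi> i"
    using v iso unfolding graph_iso_def bij_betw_def cycle_V_def by auto
  then have "v = (\<phi> \<circ> ?\<rho> ^^ i) 0"
    using rotated[of i] by simp
  then show thesis
    using that rotated[of i] by blast
qed

section \<open>Paths\<close>

lemma path_edge_iff: "{x, y} \<in> path_E n \<longleftrightarrow> Suc x < n \<and> y = Suc x \<or> Suc y < n \<and> x = Suc y"
  unfolding path_E_def by (auto simp: doubleton_eq_iff)

lemma graph_path: "graph (path_V n) (path_E n)"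
proof -
  have "\<exists>x y. x \<in> path_V n \<and> y \<in> path_V n \<and> x \<noteq> y \<and> e = {x, y}"
    if e: "e \<in> path_E n" for e
  proof -
    obtain i where "Suc i < n" "e = {i, Suc i}"
      using e unfolding path_E_def by blast
    then show ?thesis
      unfolding path_V_def by (intro exI[of _ i] exI[of _ "Suc i"]) auto
  qed
  then show ?thesis
    unfolding graph_def path_V_def by simp
qed

lemma no_isolated_path:
  assumes "2 \<le> n"
  shows "no_isolated (path_V n) (path_E n)"
proof -
  have "{x, if Suc x < n then Suc x else x - 1} \<in> path_E n" if "x < n" for x
    using that assms unfolding path_edge_iff by auto
  then show ?thesis
    unfolding no_isolated_def path_V_def by blast
qed

lemma deg_path_le_2: "deg (path_E n) x \<le> 2"
proof -
  have "{y. {x, y} \<in> path_E n} \<subseteq> {Suc x, x - 1}"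
    unfolding path_edge_iff by auto
  then have "deg (path_E n) x \<le> card {Suc x, x - 1}"
    unfolding deg_def by (rule card_mono[rotated]) simp
  also have "\<dots> \<le> 2"
    by (simp add: card_insert_le_m1)
  finally show ?thesis .
qed

lemma gamma_tR_path_ge:
  assumes "2 \<le> n"
  shows "n \<le> gamma_tR (path_V n) (path_E n)"
proof (rule gamma_tR_ge[OF no_isolated_path[OF assms]])
  fix h assume "trdf (path_V n) (path_E n) h"
  then show "n \<le> sum h (path_V n)"
    using card_le_trdf_weight_if_deg_le_2[OF graph_path] deg_path_le_2 unfolding path_V_def by simp
qed

lemma trdf_except_path:
  assumes n: "5 \<le> n"
  shows "trdf_except (path_V n) (path_E n) {1}
    (\<lambda>k. if k = 1 then 2 else if k = 0 \<or> k = 2 then 0 else 1)"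
  (is "trdf_except _ _ _ ?g")
  unfolding trdf_except_def trdf_at_def
proof (intro conjI ballI impI)
  show "?g x \<le> 2" for x
    by simp
next
  fix x assume x: "x \<in> path_V n - {1}"
  show "\<exists>y. {x, y} \<in> path_E n \<and> ?g y = 2" if "?g x = 0"
  proof -
    have "x = 0 \<or> x = 2"
      using that x by (auto split: if_splits)
    then have "{x, 1} \<in> path_E n"
      using n unfolding path_edge_iff by auto
    then show ?thesis
      by auto
  qed
  show "\<exists>y. {x, y} \<in> path_E n \<and> 0 < ?g y" if "0 < ?g x"
  proof -
    have x': "3 \<le> x" "x < n"
      using that x unfolding path_V_def by (auto split: if_splits)
    define y where "y = (if Suc x < n then Suc x else x - 1)"
    have "{x, y} \<in> path_E n" "0 < ?g y"
      using n x' unfolding y_def path_edge_iff by auto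
    then show ?thesis
      by blast
  qed
qed

lemma path_template:
  assumes n: "5 \<le> n"
  shows "graph (path_V n) (path_E n)" "no_isolated (path_V n) (path_E n)" "1 \<in> path_V n"
    "subminimal_trdf_except (path_V n) (path_E n) 1
       (\<lambda>k. if k = 1 then 2 else if k = 0 \<or> k = 2 then 0 else 1)"
proof -
  let ?g = "\<lambda>k::nat. if k = 1 then 2 else if k = 0 \<or> k = 2 then 0 else (1::nat)"
  show "graph (path_V n) (path_E n)" "no_isolated (path_V n) (path_E n)" "1 \<in> path_V n"
    using n graph_path no_isolated_path unfolding path_V_def by simp_all
  have "path_V n = {0, 1, 2} \<union> {3..<n}"
    using n unfolding path_V_def by auto
  then have "sum ?g (path_V n) = sum ?g {0, 1, 2} + sum ?g {3..<n}"
    by (simp only:) (rule sum.union_disjoint, auto)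
  also have "sum ?g {3..<n} = sum (\<lambda>_. 1) {3..<n}"
    by (rule sum.cong) auto
  finally have "sum ?g (path_V n) < n"
    using n by simp
  then show "subminimal_trdf_except (path_V n) (path_E n) 1 ?g"
    using trdf_except_path[OF n] gamma_tR_path_ge[of n] n
    unfolding subminimal_trdf_except_def by simp
qed

lemma path_reflection_iso:
  "graph_iso (path_V n) (path_E n) (path_V n) (path_E n) (\<lambda>k. n - 1 - k)"
proof -
  let ?\<rho> = "\<lambda>k. n - 1 - k"
  have bij: "bij_betw ?\<rho> {..<n} {..<n}"
    by (rule bij_betw_byWitness[where f' = ?\<rho>]) auto
  have "(\<lambda>e. ?\<rho> ` e) ` path_E n = path_E n"
  proof (intro equalityI subsetI)
    fix e assume "e \<in> (\<lambda>e. ?\<rho> ` e) ` path_E n"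
    then obtain i where "Suc i < n" "e = {n - 1 - i, n - 1 - Suc i}"
      unfolding path_E_def by auto
    then have "e = {n - 2 - i, Suc (n - 2 - i)}" "Suc (n - 2 - i) < n"
      by auto
    then show "e \<in> path_E n"
      unfolding path_E_def by blast
  next
    fix e assume "e \<in> path_E n"
    then obtain i where i: "Suc i < n" "e = {i, Suc i}"
      unfolding path_E_def by blast
    then have "e = ?\<rho> ` {n - 2 - i, Suc (n - 2 - i)}" "Suc (n - 2 - i) < n"
      by auto
    then show "e \<in> (\<lambda>e. ?\<rho> ` e) ` path_E n"
      unfolding path_E_def by blast
  qed
  with bij show ?thesis
    unfolding graph_iso_def path_V_def by blast
qed

lemma support_vertex_path:
  assumes "support_vertex (path_V n) (path_E n) i"
  shows "i = 1 \<or> i = n - 2"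
proof -
  obtain y where y: "{i, y} \<in> path_E n" "leaf (path_V n) (path_E n) y"
    using assms unfolding support_vertex_def by blast
  have "y = 0 \<or> Suc y = n"
  proof (rule ccontr)
    assume "\<not> (y = 0 \<or> Suc y = n)"
    then have nbrs: "{y - 1, Suc y} \<subseteq> {z. {y, z} \<in> path_E n}"
      using y(2) unfolding leaf_def path_V_def path_edge_iff by auto
    have "card {y - 1, Suc y} \<le> deg (path_E n) y"
      unfolding deg_def by (rule card_mono[OF finite_neighbors[OF graph_path] nbrs])
    then have "2 \<le> deg (path_E n) y"
      by simp
    then show False
      using y(2) unfolding leaf_def by simp
  qed
  then show ?thesis
    using y(1) unfolding path_edge_iff by auto
qed

lemma path_iso_at_support_vertex:
  assumes iso: "graph_iso (path_V n) (path_E n) VR ER \<phi>" and v: "support_vertex VR ER v"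
  obtains \<psi> where "graph_iso (path_V n) (path_E n) VR ER \<psi>" "v = \<psi> 1"
proof -
  obtain i where i: "i \<in> path_V n" "v = \<phi> i"
    using v iso unfolding support_vertex_def graph_iso_def bij_betw_def by auto
  then have "i = 1 \<or> i = n - 2"
    using support_vertex_path support_vertex_graph_isoD[OF graph_path iso] v by blast
  then show thesis
  proof
    assume "i = 1"
    then show thesis
      using that iso i(2) by blast
  next
    assume "i = n - 2"
    then have "v = (\<phi> \<circ> (\<lambda>k. n - 1 - k)) 1"
      using i by (simp add: numeral_2_eq_2)
    then show thesis
      using that graph_iso_comp[OF path_reflection_iso iso] by blast
  qed
qed

section \<open>Strong support vertices\<close>

definition leaf_neighbors :: "'a set \<Rightarrow> 'a set set \<Rightarrow> 'a \<Rightarrow> 'a set" where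
  "leaf_neighbors V E v = {x. {v, x} \<in> E \<and> leaf V E x}"

locale strong_support_vertex =
  fixes V :: "'a set" and E :: "'a set set" and v :: 'a
  assumes graph: "graph V E" and no_isolated: "no_isolated V E"
    and two_leaves: "2 \<le> card (leaf_neighbors V E v)"
begin

abbreviation leaves :: "'a set" where
  "leaves \<equiv> leaf_neighbors V E v"

definition rest_V :: "'a set" where
  "rest_V = V - insert v leaves"

definition rest_E :: "'a set set" where
  "rest_E = {e \<in> E. e \<inter> insert v leaves = {}}"

definition cut_E :: "'a set set" where
  "cut_E = {{v, w} | w. {v, w} \<in> E \<and> w \<notin> leaves}"

lemma leaves_subset_neighbors: "leaves \<subseteq> {y. {v, y} \<in> E}"
  unfolding leaf_neighbors_def by blast

lemma finite_leaves: "finite leaves"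
  using finite_subset[OF leaves_subset_neighbors finite_neighbors[OF graph]] .

lemma v_notin_leaves: "v \<notin> leaves"
  using graph_edgeD(3)[OF graph] unfolding leaf_neighbors_def by blast

lemma leaf_neighbor_eq: "l \<in> leaves \<Longrightarrow> {l, y} \<in> E \<Longrightarrow> y = v"
  unfolding leaf_neighbors_def by (metis insert_commute leaf_neighbor_unique mem_Collect_eq)

lemma v_not_leaf: "\<not> leaf V E v"
proof -
  have "card leaves \<le> deg E v"
    unfolding deg_def by (rule card_mono[OF finite_neighbors[OF graph] leaves_subset_neighbors])
  then show ?thesis
    using two_leaves unfolding leaf_def by simp
qed

lemma vertices_split: "rest_V \<union> insert v leaves = V"
proof -
  obtain l where "l \<in> leaves"
    using two_leaves by fastforce
  then have "{v, l} \<in> E"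
    unfolding leaf_neighbors_def by blast
  then have "v \<in> V"
    by (rule graph_edgeD(1)[OF graph])
  moreover have "leaves \<subseteq> V"
    using leaves_subset_neighbors graph_edgeD(2)[OF graph] by blast
  ultimately show ?thesis
    unfolding rest_V_def by blast
qed

lemma edges_split: "rest_E \<union> star_edges v leaves \<union> cut_E = E"
proof
  show "rest_E \<union> star_edges v leaves \<union> cut_E \<subseteq> E"
    unfolding rest_E_def cut_E_def star_edges_def leaf_neighbors_def by blast
  show "E \<subseteq> rest_E \<union> star_edges v leaves \<union> cut_E"
  proof
    fix e assume e: "e \<in> E"
    then obtain a b where ab: "e = {a, b}"
      using graph unfolding graph_def by blast
    show "e \<in> rest_E \<union> star_edges v leaves \<union> cut_E"
    proof (cases "v \<in> e")
      case True
      then obtain w where "e = {v, w}"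
        using ab by blast
      then show ?thesis
        using e unfolding star_edges_def cut_E_def by blast
    next
      case False
      have "a \<notin> leaves" "b \<notin> leaves"
        using e False leaf_neighbor_eq unfolding ab by (metis insert_commute insertCI)+
      then show ?thesis
        using e False unfolding ab rest_E_def by blast
    qed
  qed
qed

lemma cut_E_disjoint: "cut_E \<inter> (rest_E \<union> star_edges v leaves) = {}"
  using v_notin_leaves unfolding cut_E_def rest_E_def star_edges_def
  by (auto simp: doubleton_eq_iff)

lemma card_cut_E: "card cut_E = deg E v - card leaves"
proof -
  have "cut_E = (\<lambda>w. {v, w}) ` ({y. {v, y} \<in> E} - leaves)"
    unfolding cut_E_def by blast
  moreover have "inj_on (\<lambda>w. {v, w}) ({y. {v, y} \<in> E} - leaves)"
    by (rule inj_onI) (auto simp: doubleton_eq_iff)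
  ultimately show ?thesis
    unfolding deg_def using card_Diff_subset[OF finite_leaves leaves_subset_neighbors]
    by (simp add: card_image)
qed

lemma graph_rest: "graph rest_V rest_E"
  unfolding graph_def
proof
  show "finite rest_V"
    using graph_finite[OF graph] unfolding rest_V_def by simp
  show "\<forall>e\<in>rest_E. \<exists>x y. x \<in> rest_V \<and> y \<in> rest_V \<and> x \<noteq> y \<and> e = {x, y}"
  proof
    fix e assume e: "e \<in> rest_E"
    then have "e \<in> E"
      unfolding rest_E_def by blast
    then obtain a b where "a \<in> V" "b \<in> V" "a \<noteq> b" "e = {a, b}"
      using graph unfolding graph_def by meson
    then show "\<exists>x y. x \<in> rest_V \<and> y \<in> rest_V \<and> x \<noteq> y \<and> e = {x, y}"
      using e unfolding rest_E_def rest_V_def by blast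
  qed
qed

lemma no_isolated_rest: "no_isolated rest_V rest_E"
  unfolding no_isolated_def
proof
  fix x assume x: "x \<in> rest_V"
  then have xV: "x \<in> V" and xv: "x \<noteq> v" and xL: "x \<notin> leaves"
    unfolding rest_V_def by auto
  have nbr_notin: "y \<notin> leaves" if "{x, y} \<in> E" for y
    using leaf_neighbor_eq that xv by (metis insert_commute)
  obtain y where y: "{x, y} \<in> E" "y \<noteq> v"
  proof -
    obtain y where y: "{x, y} \<in> E"
      using no_isolated xV unfolding no_isolated_def by blast
    show thesis
    proof (cases "y = v")
      case True
      then have "\<not> leaf V E x"
        using y xL unfolding leaf_neighbors_def by (simp add: insert_commute)
      then have "{z. {x, z} \<in> E} \<noteq> {v}"
        using xV unfolding leaf_def deg_def by auto
      then show thesis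
        using that y True by blast
    next
      case False
      then show thesis
        using that y by blast
    qed
  qed
  then have "{x, y} \<in> rest_E"
    using xv xL nbr_notin unfolding rest_E_def by auto
  then show "\<exists>y. {x, y} \<in> rest_E" ..
qed

lemma support_vertex_in_rest:
  assumes uv: "{u, v} \<in> E" and u: "support_vertex V E u"
  shows "u \<in> rest_V" "{u, v} \<in> cut_E" "support_vertex rest_V rest_E u"
proof -
  obtain l where ul: "{u, l} \<in> E" and l: "leaf V E l"
    using u unfolding support_vertex_def by blast
  have uL: "u \<notin> leaves"
    using leaf_neighbor_eq[OF _ ul] l v_not_leaf by blast
  have lL: "l \<notin> insert v leaves"
    using leaf_neighbor_eq[of l u] ul uv l v_not_leaf graph_edgeD(3)[OF graph uv]
    by (auto simp: insert_commute)
  show uR: "u \<in> rest_V"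
    using uL graph_edgeD[OF graph uv] unfolding rest_V_def by auto
  show "{u, v} \<in> cut_E"
    using uv uL unfolding cut_E_def by (auto simp: insert_commute)
  have "{u, l} \<in> rest_E" "l \<in> rest_V"
    using ul lL uR graph_edgeD(2)[OF graph ul] unfolding rest_E_def rest_V_def by auto
  moreover have "rest_E \<subseteq> E"
    unfolding rest_E_def by blast
  ultimately have "leaf rest_V rest_E l"
    using leaf_subgraph[OF l] by (simp add: insert_commute)
  then show "support_vertex rest_V rest_E u"
    using uR \<open>{u, l} \<in> rest_E\<close> unfolding support_vertex_def by blast
qed

lemma b_tR_le_card_cut_E:
  assumes uv: "{u, v} \<in> E" and u: "support_vertex V E u"
  shows "b_tR V E \<le> enat (card cut_E)"
proof -
  obtain f where f: "gamma_tR_fun rest_V rest_E f"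
    using gamma_tR_fun_exists[OF no_isolated_rest] by blast
  have "trdf rest_V rest_E f"
    using f unfolding gamma_tR_fun_def by blast
  then have "0 < f u"
    using support_vertex_in_rest(3)[OF uv u] by (rule trdf_support_vertex_pos)
  moreover have "leaves \<noteq> {}"
    using two_leaves by auto
  moreover have "rest_V \<inter> insert v leaves = {}"
    unfolding rest_V_def by blast
  ultimately have "b_tR (rest_V \<union> insert v leaves) (rest_E \<union> star_edges v leaves \<union> cut_E)
      \<le> enat (card cut_E)"
    using b_tR_glue_le_card[OF graph_rest no_isolated_rest
        graph_star_edges[OF finite_leaves v_notin_leaves] no_isolated_star_edges _ f
        support_vertex_in_rest(1)[OF uv u] _ _
        subminimal_trdf_except_star_center[OF v_notin_leaves finite_leaves two_leaves]
        cut_E_disjoint support_vertex_in_rest(2)[OF uv u]]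
    by simp
  then show ?thesis
    unfolding vertices_split edges_split .
qed

end

theorem mainTheorem9:
  shows
  "(\<forall>(VH :: 'a set) EH VR ER v u F s.
      graph VH EH \<and> no_isolated VH EH \<and> VH \<inter> VR = {} \<and> u \<in> VH
      \<and> ( ( ((\<exists>r \<phi>. r \<ge> 2 \<and> graph_iso (star_V r) (star_E r) VR ER \<phi> \<and> v = \<phi> 0)
            \<or> (\<exists>n \<phi>. n \<ge> 5 \<and> graph_iso (cycle_V n) (cycle_E n) VR ER \<phi> \<and> v \<in> VR)
            \<or> (\<exists>n \<phi>. n \<ge> 5 \<and> graph_iso (path_V n) (path_E n) VR ER \<phi> \<and> support_vertex VR ER v))
           \<and> (\<exists>f. gamma_tR_fun VH EH f \<and> f u > 0))
        \<or> ((\<exists>r \<phi>. r \<ge> 2 \<and> graph_iso (spider_V r) (spider_E r) VR ER \<phi> \<and> v = \<phi> 0)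
           \<and> (\<exists>f. gamma_tR_fun VH EH f \<and> f u = 2)))
      \<and> graph (VH \<union> VR) (EH \<union> ER \<union> F) \<and> F \<inter> (EH \<union> ER) = {}
      \<and> finite F \<and> card F = s \<and> {u, v} \<in> F
      \<longrightarrow> b_tR (VH \<union> VR) (EH \<union> ER \<union> F) \<le> enat s)
   \<and> (\<forall>(V :: 'a set) E u v.
      graph V E \<and> no_isolated V E \<and> {u, v} \<in> E
      \<and> support_vertex V E u \<and> support_vertex V E v
      \<and> card {x. {v, x} \<in> E \<and> leaf V E x} \<ge> 2
      \<longrightarrow> b_tR V E \<le> enat (deg E v - card {x. {v, x} \<in> E \<and> leaf V E x}))"
proof ((intro conjI allI impI; elim conjE disjE exE), goal_cases)
  case (1 VH EH VR ER v u F s f r \<phi>)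
  then have "b_tR (VH \<union> VR) (EH \<union> ER \<union> F) \<le> enat (card F)"
    by (intro b_tR_glue_iso_le_card[OF star_template]) auto
  with 1 show ?case
    by simp
next
  case (2 VH EH VR ER v u F s f n \<phi>)
  then have "0 < n"
    by simp
  then obtain \<psi> where "graph_iso (cycle_V n) (cycle_E n) VR ER \<psi>" "v = \<psi> 0"
    using cycle_iso_at_vertex 2 by metis
  with 2 have "b_tR (VH \<union> VR) (EH \<union> ER \<union> F) \<le> enat (card F)"
    by (intro b_tR_glue_iso_le_card[OF cycle_template]) auto
  with 2 show ?case
    by simp
next
  case (3 VH EH VR ER v u F s f n \<phi>)
  then obtain \<psi> where "graph_iso (path_V n) (path_E n) VR ER \<psi>" "v = \<psi> 1"
    using path_iso_at_support_vertex by metis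
  with 3 have "b_tR (VH \<union> VR) (EH \<union> ER \<union> F) \<le> enat (card F)"
    by (intro b_tR_glue_iso_le_card[OF path_template]) auto
  with 3 show ?case
    by simp
next
  case (4 VH EH VR ER v u F s r f \<phi>)
  then have "b_tR (VH \<union> VR) (EH \<union> ER \<union> F) \<le> enat (card F)"
    by (intro b_tR_glue_iso_le_card[OF spider_template, where f = f]) auto
  with 4 show ?case
    by simp
next
  case (5 V E u v)
  then interpret strong_support_vertex V E v
    by unfold_locales (simp_all add: leaf_neighbors_def)
  show ?case
    using b_tR_le_card_cut_E[OF 5(3,4)] card_cut_E unfolding leaf_neighbors_def by simp
qed

end
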